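(* Let $\Omega$ be a finite set and let $p,q$ be probability distributions on $\Omega$. Let $X_1,X_2$ be drawn i.i.d. from $p$ and $\mathcal{S}=\{X_1,X_2\}$, and let $P^\star(\mathrm{acc})$ be the supremum of $\Pr(Z\in\mathcal{S})$ over all valid token-level selection rules with output $Z$. Then $$P^\star(\mathrm{acc})=\min_{\mathcal{A}\subseteq\Omega}\Big\{\sum_{s\in\mathcal{A}}q(s)+\Big(\sum_{s\in\mathcal{A}^c}p(s)\Big)^2+2\Big(\sum_{s\in\mathcal{A}}p(s)\Big)\Big(\sum_{s\in\mathcal{A}^c}p(s)\Big)\Big\},$$ where $\mathcal{A}^c=\Omega\setminus\mathcal{A}$.
   Context: A token-level selection rule is a conditional distribution $\mathcal{P}(\cdot\mid X_1,X_2)$ on $\Omega$; it is valid if its output $Z$ satisfies $\Pr(Z=z)=q(z)$ for all $z\in\Omega$, where $X_1,X_2$ are i.i.d. with law $p$. *)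

theory Defs
  imports "HOL-Probability.Probability"
begin

text \<open>A token-level selection rule is a Markov kernel K x1 x2 (a distribution on the
  finite token set, the type 'a). Its output law, when X1, X2 are i.i.d. with law p.\<close>

definition output_prob :: "'a::finite pmf \<Rightarrow> ('a \<Rightarrow> 'a \<Rightarrow> 'a pmf) \<Rightarrow> 'a \<Rightarrow> real" where
  "output_prob p K z = (\<Sum>x1\<in>UNIV. \<Sum>x2\<in>UNIV. pmf p x1 * pmf p x2 * pmf (K x1 x2) z)"

definition valid_rule :: "'a::finite pmf \<Rightarrow> 'a pmf \<Rightarrow> ('a \<Rightarrow> 'a \<Rightarrow> 'a pmf) \<Rightarrow> bool" where
  "valid_rule p q K \<longleftrightarrow> (\<forall>z. output_prob p K z = pmf q z)"

definition accept_prob :: "'a::finite pmf \<Rightarrow> ('a \<Rightarrow> 'a \<Rightarrow> 'a pmf) \<Rightarrow> real" where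
  "accept_prob p K = (\<Sum>x1\<in>UNIV. \<Sum>x2\<in>UNIV.
      pmf p x1 * pmf p x2 * measure_pmf.prob (K x1 x2) {x1, x2})"

definition opt_accept :: "'a::finite pmf \<Rightarrow> 'a pmf \<Rightarrow> real" where
  "opt_accept p q = Sup {accept_prob p K | K. valid_rule p q K}"

end

theory Submission
  imports Defs
begin

(*
  A selection rule is the same thing as a coupling of the pair law p \<otimes> p with q: a
  coupling disintegrates into a kernel, and the rule accepts exactly the mass the coupling
  puts on triples ((x, y), z) with z \<in> {x, y}. For any A, the output lies in A with
  probability q(A), and whenever both drafts lie in A acceptance forces the output into A;
  hence acceptance is at most q(A) + 1 - p(A)^2.

  Conversely, maximising the accepted mass is a supply-demand problem from pairs to tokens.
  Add a rejection sink of capacity \<delta> = 1 - min_A (q(A) + 1 - p(A)^2). By Gale's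
  supply-demand theorem (a weighted Hall theorem) a flow shipping all of p \<otimes> p exists
  as soon as (p \<otimes> p)(S) \<le> \<delta> + q(N(S)) for every set S of pairs; since S \<subseteq> A \<times> A
  for A = N(S), this is p(A)^2 \<le> q(A) + \<delta>. The flow into the tokens is a sub-coupling
  of mass at least 1 - \<delta> supported on accepting triples, and completing it to a coupling
  gives a valid rule attaining the bound.
*)

section \<open>Supply-demand flows\<close>

lemma sum_fun_upd_diff:
  fixes a :: "'i \<Rightarrow> real"
  assumes "finite S"
  shows "sum (a(i0 := a i0 - t)) S = sum a S - (if i0 \<in> S then t else 0)"
proof -
  have "a(i0 := a i0 - t) = (\<lambda>i. a i - (if i = i0 then t else 0))"
    by (simp add: fun_eq_iff)
  then show ?thesis using assms by (simp add: sum_subtractf)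
qed

definition hall_condition :: "('i \<times> 'j) set \<Rightarrow> ('i \<Rightarrow> real) \<Rightarrow> ('j \<Rightarrow> real) \<Rightarrow> bool" where
  "hall_condition E a b \<longleftrightarrow> (\<forall>S. sum a S \<le> sum b (E `` S))"

definition supply_flow ::
    "('i::finite \<times> 'j::finite) set \<Rightarrow> ('i \<Rightarrow> real) \<Rightarrow> ('j \<Rightarrow> real) \<Rightarrow> ('i \<Rightarrow> 'j \<Rightarrow> real) \<Rightarrow> bool" where
  "supply_flow E a b f \<longleftrightarrow>
     (\<forall>i j. 0 \<le> f i j \<and> (f i j \<noteq> 0 \<longrightarrow> (i, j) \<in> E))
     \<and> (\<forall>i. (\<Sum>j\<in>UNIV. f i j) = a i) \<and> (\<forall>j. (\<Sum>i\<in>UNIV. f i j) \<le> b j)"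

lemma supply_flow_add:
  assumes "supply_flow E1 a1 b1 f1" "supply_flow E2 a2 b2 f2" "E1 \<union> E2 \<subseteq> E"
    and "\<And>i. a1 i + a2 i = a i" "\<And>j. b1 j + b2 j \<le> b j"
  shows "supply_flow E a b (\<lambda>i j. f1 i j + f2 i j)"
proof -
  have "(\<Sum>i\<in>UNIV. f1 i j + f2 i j) \<le> b j" for j
  proof -
    have "(\<Sum>i\<in>UNIV. f1 i j) \<le> b1 j" "(\<Sum>i\<in>UNIV. f2 i j) \<le> b2 j"
      using assms(1,2) unfolding supply_flow_def by auto
    then show ?thesis using assms(5)[of j] by (simp add: sum.distrib)
  qed
  moreover have "f1 i j + f2 i j \<noteq> 0 \<Longrightarrow> (i, j) \<in> E" for i j
    using assms(1-3) unfolding supply_flow_def by (metis Un_iff add_0 subsetD)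
  ultimately show ?thesis
    using assms(1,2,4) unfolding supply_flow_def by (simp add: sum.distrib)
qed

lemma supply_flow_mono_edges:
  "supply_flow E a b f \<Longrightarrow> E \<subseteq> E' \<Longrightarrow> supply_flow E' a b f"
  unfolding supply_flow_def by blast

lemma supply_flow_add_edge:
  assumes "supply_flow E (a(i0 := a i0 - t)) (b(j0 := b j0 - t)) f"
    and "(i0, j0) \<in> E" "0 \<le> t"
  shows "supply_flow E a b (\<lambda>i j. f i j + (if i = i0 \<and> j = j0 then t else 0))"
  unfolding supply_flow_def
proof (intro conjI allI)
  fix i j
  show "0 \<le> f i j + (if i = i0 \<and> j = j0 then t else 0)"
    "f i j + (if i = i0 \<and> j = j0 then t else 0) \<noteq> 0 \<longrightarrow> (i, j) \<in> E"
    using assms unfolding supply_flow_def by auto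
next
  fix i
  have "(\<Sum>j\<in>UNIV. if i = i0 \<and> j = j0 then t else 0) = (if i = i0 then t else 0)"
    by (cases "i = i0") simp_all
  moreover have "(\<Sum>j\<in>UNIV. f i j) = (a(i0 := a i0 - t)) i"
    using assms(1) unfolding supply_flow_def by blast
  ultimately show "(\<Sum>j\<in>UNIV. f i j + (if i = i0 \<and> j = j0 then t else 0)) = a i"
    by (simp add: sum.distrib)
next
  fix j
  have "(\<Sum>i\<in>UNIV. if i = i0 \<and> j = j0 then t else 0) = (if j = j0 then t else 0)"
    by (cases "j = j0") simp_all
  moreover have "(\<Sum>i\<in>UNIV. f i j) \<le> (b(j0 := b j0 - t)) j"
    using assms(1) unfolding supply_flow_def by blast
  ultimately show "(\<Sum>i\<in>UNIV. f i j + (if i = i0 \<and> j = j0 then t else 0)) \<le> b j"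
    by (simp add: sum.distrib split: if_splits)
qed

lemma hall_condition_remove_source:
  fixes a :: "'i::finite \<Rightarrow> real" and b :: "'j::finite \<Rightarrow> real"
  assumes "hall_condition E a b" "a i0 = 0"
  shows "hall_condition (E - {i0} \<times> UNIV) a b"
  unfolding hall_condition_def
proof
  fix S
  have "(E - {i0} \<times> UNIV) `` S = E `` (S - {i0})" by auto
  moreover have "sum a S = sum a (S - {i0})" using assms(2) by (simp add: sum_diff1)
  ultimately show "sum a S \<le> sum b ((E - {i0} \<times> UNIV) `` S)"
    using assms(1) unfolding hall_condition_def by simp
qed

lemma hall_condition_remove_sink:
  fixes a :: "'i::finite \<Rightarrow> real" and b :: "'j::finite \<Rightarrow> real"
  assumes "hall_condition E a b" "b j0 = 0"
  shows "hall_condition (E - UNIV \<times> {j0}) a b"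
  unfolding hall_condition_def
proof
  fix S
  have "(E - UNIV \<times> {j0}) `` S = E `` S - {j0}" by auto
  moreover have "sum b (E `` S - {j0}) = sum b (E `` S)" using assms(2) by (simp add: sum_diff1)
  ultimately show "sum a S \<le> sum b ((E - UNIV \<times> {j0}) `` S)"
    using assms(1) unfolding hall_condition_def by simp
qed

lemma hall_condition_restrict_inside:
  fixes a :: "'i::finite \<Rightarrow> real" and b :: "'j::finite \<Rightarrow> real"
  assumes "hall_condition E a b"
  shows "hall_condition (E \<inter> S \<times> E `` S)
           (\<lambda>i. if i \<in> S then a i else 0) (\<lambda>j. if j \<in> E `` S then b j else 0)"
  unfolding hall_condition_def
proof
  fix U
  have "(\<Sum>i\<in>U. if i \<in> S then a i else 0) = sum a (U \<inter> S)"
    by (simp add: sum.inter_restrict)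
  also have "\<dots> \<le> sum b (E `` (U \<inter> S))"
    using assms unfolding hall_condition_def by blast
  also have "\<dots> = (\<Sum>j\<in>(E \<inter> S \<times> E `` S) `` U. if j \<in> E `` S then b j else 0)"
    by (intro sum.cong) auto
  finally show "(\<Sum>i\<in>U. if i \<in> S then a i else 0)
      \<le> (\<Sum>j\<in>(E \<inter> S \<times> E `` S) `` U. if j \<in> E `` S then b j else 0)" .
qed

lemma hall_condition_restrict_outside:
  fixes a :: "'i::finite \<Rightarrow> real" and b :: "'j::finite \<Rightarrow> real"
  assumes "hall_condition E a b" and tight: "sum a S = sum b (E `` S)"
  shows "hall_condition (E \<inter> (- S) \<times> (- E `` S))
           (\<lambda>i. if i \<in> S then 0 else a i) (\<lambda>j. if j \<in> E `` S then 0 else b j)"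
  unfolding hall_condition_def
proof
  fix U
  have "(\<Sum>i\<in>U. if i \<in> S then 0 else a i) + sum a S = sum a (U - S) + sum a S"
    unfolding Diff_eq by (simp add: sum.If_cases)
  also have "\<dots> = sum a ((U - S) \<union> S)"
    by (rule sum.union_disjoint[symmetric]) auto
  also have "\<dots> \<le> sum b (E `` ((U - S) \<union> S))"
    using assms(1) unfolding hall_condition_def by blast
  also have "E `` ((U - S) \<union> S) = (E `` (U - S) - E `` S) \<union> E `` S"
    by blast
  also have "sum b \<dots> = sum b (E `` (U - S) - E `` S) + sum b (E `` S)"
    by (rule sum.union_disjoint) auto
  also have "sum b (E `` (U - S) - E `` S)
      = (\<Sum>j\<in>(E \<inter> (- S) \<times> (- E `` S)) `` U. if j \<in> E `` S then 0 else b j)"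
    by (intro sum.cong) auto
  finally show "(\<Sum>i\<in>U. if i \<in> S then 0 else a i)
      \<le> (\<Sum>j\<in>(E \<inter> (- S) \<times> (- E `` S)) `` U. if j \<in> E `` S then 0 else b j)"
    using tight by linarith
qed

lemma hall_condition_saturate_edge:
  fixes a :: "'i::finite \<Rightarrow> real" and b :: "'j::finite \<Rightarrow> real"
  assumes hall: "hall_condition E a b" and edge: "(i0, j0) \<in> E"
    and "0 \<le> a i0" "0 \<le> b j0"
  obtains t where "0 \<le> t" "t \<le> a i0" "t \<le> b j0"
    "hall_condition E (a(i0 := a i0 - t)) (b(j0 := b j0 - t))"
    "t = a i0 \<or> t = b j0 \<or> (\<exists>S. i0 \<notin> S \<and> j0 \<in> E `` S
        \<and> sum (a(i0 := a i0 - t)) S = sum (b(j0 := b j0 - t)) (E `` S))"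
proof -
  define slack where "slack S = sum b (E `` S) - sum a S" for S
  \<comment> \<open>Pushing t along (i0, j0) costs slack exactly for the sets S avoiding i0 with j0 \<in> E `` S.\<close>
  define crossing where "crossing = {S. i0 \<notin> S \<and> j0 \<in> E `` S}"
  define T where "T = insert (a i0) (insert (b j0) (slack ` crossing))"
  define t where "t = Min T"
  have "finite T"
    unfolding T_def by simp
  have "t \<le> x" if "x \<in> T" for x
    unfolding t_def using \<open>finite T\<close> that by (rule Min_le)
  then have t_le: "t \<le> a i0" "t \<le> b j0" "\<And>S. S \<in> crossing \<Longrightarrow> t \<le> slack S"
    unfolding T_def by auto
  have t_cases: "t = a i0 \<or> t = b j0 \<or> (\<exists>S\<in>crossing. t = slack S)"
    using Min_in[OF \<open>finite T\<close>] unfolding t_def T_def by auto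
  have "0 \<le> slack S" for S
    using hall unfolding hall_condition_def slack_def by simp
  then have "0 \<le> t"
    using t_cases assms(3,4) by auto
  have "hall_condition E (a(i0 := a i0 - t)) (b(j0 := b j0 - t))"
    unfolding hall_condition_def
  proof
    fix S
    have "i0 \<in> S \<Longrightarrow> j0 \<in> E `` S"
      using edge by blast
    moreover have "sum a S \<le> sum b (E `` S)"
      using hall unfolding hall_condition_def by blast
    ultimately show "sum (a(i0 := a i0 - t)) S \<le> sum (b(j0 := b j0 - t)) (E `` S)"
      using t_le(3)[of S] \<open>0 \<le> t\<close>
      unfolding sum_fun_upd_diff[OF finite] slack_def crossing_def
      by (cases "i0 \<in> S"; cases "j0 \<in> E `` S") simp_all
  qed
  moreover have "sum (a(i0 := a i0 - t)) S = sum (b(j0 := b j0 - t)) (E `` S)"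
    if "S \<in> crossing" "t = slack S" for S
    using that unfolding sum_fun_upd_diff[OF finite] slack_def crossing_def by simp
  ultimately show thesis
    using that \<open>0 \<le> t\<close> t_le(1,2) t_cases unfolding crossing_def by blast
qed

lemma supply_flow_of_saturated_edge:
  fixes E :: "('i::finite \<times> 'j::finite) set"
  assumes smaller: "\<And>E' a b. E' \<subset> E \<Longrightarrow> \<forall>i. 0 \<le> a i \<Longrightarrow> \<forall>j. 0 \<le> b j \<Longrightarrow>
      hall_condition E' a b \<Longrightarrow> \<exists>f. supply_flow E' a b f"
    and nonneg: "\<forall>i. 0 \<le> a i" "\<forall>j. 0 \<le> b j"
    and hall: "hall_condition E a b" and edge: "(i0, j0) \<in> E"
    and saturated: "a i0 = 0 \<or> b j0 = 0 \<or> (\<exists>S. i0 \<notin> S \<and> j0 \<in> E `` S \<and> sum a S = sum b (E `` S))"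
  shows "\<exists>f. supply_flow E a b f"
  using saturated
proof (elim disjE exE conjE)
  assume "a i0 = 0"
  then show ?thesis
    using smaller[of "E - {i0} \<times> UNIV"] hall_condition_remove_source[OF hall] edge nonneg
      supply_flow_mono_edges by blast
next
  assume "b j0 = 0"
  then show ?thesis
    using smaller[of "E - UNIV \<times> {j0}"] hall_condition_remove_sink[OF hall] edge nonneg
      supply_flow_mono_edges by blast
next
  fix S assume S: "i0 \<notin> S" "j0 \<in> E `` S" and tight: "sum a S = sum b (E `` S)"
  have "E \<inter> S \<times> E `` S \<subset> E" "E \<inter> (- S) \<times> (- E `` S) \<subset> E"
    using edge S by blast+
  moreover have "\<forall>i. 0 \<le> (if i \<in> S then a i else 0)" "\<forall>j. 0 \<le> (if j \<in> E `` S then b j else 0)"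
    "\<forall>i. 0 \<le> (if i \<in> S then 0 else a i)" "\<forall>j. 0 \<le> (if j \<in> E `` S then 0 else b j)"
    using nonneg by simp_all
  ultimately obtain f1 f2
    where "supply_flow (E \<inter> S \<times> E `` S)
        (\<lambda>i. if i \<in> S then a i else 0) (\<lambda>j. if j \<in> E `` S then b j else 0) f1"
      and "supply_flow (E \<inter> (- S) \<times> (- E `` S))
        (\<lambda>i. if i \<in> S then 0 else a i) (\<lambda>j. if j \<in> E `` S then 0 else b j) f2"
    using smaller hall_condition_restrict_inside[OF hall]
      hall_condition_restrict_outside[OF hall tight] by meson
  then have "supply_flow E a b (\<lambda>i j. f1 i j + f2 i j)"
    by (rule supply_flow_add) auto
  then show ?thesis by blast
qed

(* Induction on the edge set: pushing as much as possible along one edge saturates it,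
   which lets the remaining problem be solved on fewer edges. *)
theorem hall_supply_flow:
  fixes E :: "('i::finite \<times> 'j::finite) set"
  assumes "\<forall>i. 0 \<le> a i" "\<forall>j. 0 \<le> b j" "hall_condition E a b"
  shows "\<exists>f. supply_flow E a b f"
  using finite[of E] assms
proof (induction E arbitrary: a b rule: finite_psubset_induct)
  case (psubset E)
  show ?case
  proof (cases "E = {}")
    case True
    have "a i \<le> 0" for i
    proof -
      have "sum a {i} \<le> sum b (E `` {i})"
        using psubset.prems(3) unfolding hall_condition_def by blast
      then show ?thesis using True by simp
    qed
    then have "supply_flow E a b (\<lambda>_ _. 0)"
      using psubset.prems(1,2) unfolding supply_flow_def by (simp add: order_antisym)
    then show ?thesis by blast
  next
    case False
    then obtain i0 j0 where edge: "(i0, j0) \<in> E" by auto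
    obtain t where t: "0 \<le> t" "t \<le> a i0" "t \<le> b j0"
      and hall': "hall_condition E (a(i0 := a i0 - t)) (b(j0 := b j0 - t))"
      and saturated: "t = a i0 \<or> t = b j0 \<or> (\<exists>S. i0 \<notin> S \<and> j0 \<in> E `` S
        \<and> sum (a(i0 := a i0 - t)) S = sum (b(j0 := b j0 - t)) (E `` S))"
      using hall_condition_saturate_edge[OF psubset.prems(3) edge] psubset.prems(1,2) by metis
    have "\<exists>f. supply_flow E (a(i0 := a i0 - t)) (b(j0 := b j0 - t)) f"
    proof (rule supply_flow_of_saturated_edge[OF psubset.IH _ _ hall' edge])
      show "\<forall>i. 0 \<le> (a(i0 := a i0 - t)) i" "\<forall>j. 0 \<le> (b(j0 := b j0 - t)) j"
        using psubset.prems(1,2) t by simp_all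
      show "(a(i0 := a i0 - t)) i0 = 0 \<or> (b(j0 := b j0 - t)) j0 = 0 \<or> (\<exists>S. i0 \<notin> S \<and> j0 \<in> E `` S
          \<and> sum (a(i0 := a i0 - t)) S = sum (b(j0 := b j0 - t)) (E `` S))"
        using saturated by auto
    qed
    then show ?thesis
      using supply_flow_add_edge edge t(1) by blast
  qed
qed

section \<open>Selection rules as couplings\<close>

lemma sum_UNIV_option:
  fixes g :: "'a::finite option \<Rightarrow> real"
  shows "sum g UNIV = g None + (\<Sum>z\<in>UNIV. g (Some z))"
  by (simp add: UNIV_option_conv sum.reindex)

lemma sum_pmf_UNIV: "(\<Sum>x\<in>UNIV. pmf (p::'a::finite pmf) x) = 1"
  by (rule sum_pmf_eq_1) auto

lemma sum_pmf_times_pmf: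
  "(\<Sum>x\<in>A. \<Sum>y\<in>A. pmf p x * pmf p y) = (\<Sum>s\<in>A. pmf p s)\<^sup>2"
  by (simp add: sum_product power2_eq_square)

lemma acceptance_objective_eq:
  fixes p q :: "'a::finite pmf"
  shows "(\<Sum>s\<in>A. pmf q s) + (\<Sum>s\<in>UNIV - A. pmf p s) ^ 2
           + 2 * (\<Sum>s\<in>A. pmf p s) * (\<Sum>s\<in>UNIV - A. pmf p s)
       = (\<Sum>s\<in>A. pmf q s) + 1 - (\<Sum>s\<in>A. pmf p s)\<^sup>2"
proof -
  have complement: "(\<Sum>s\<in>UNIV - A. pmf p s) = 1 - (\<Sum>s\<in>A. pmf p s)"
    using sum_diff[of UNIV A "pmf p"] by (simp add: sum_pmf_UNIV)
  show ?thesis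
    unfolding complement power2_eq_square by (simp add: algebra_simps)
qed

lemma sum_output_prob:
  "(\<Sum>z\<in>A. output_prob p K z)
     = (\<Sum>x\<in>UNIV. \<Sum>y\<in>UNIV. pmf p x * pmf p y * measure_pmf.prob (K x y) A)"
  unfolding output_prob_def
  by (simp add: measure_measure_pmf_finite sum_distrib_left sum.swap[of _ A])

lemma accept_prob_le:
  fixes p q :: "'a::finite pmf"
  assumes "valid_rule p q K"
  shows "accept_prob p K \<le> (\<Sum>s\<in>A. pmf q s) + 1 - (\<Sum>s\<in>A. pmf p s)\<^sup>2"
proof -
  let ?P = "\<lambda>x y. measure_pmf.prob (K x y)"
  let ?inside = "\<lambda>x y. if x \<in> A \<and> y \<in> A then 1 else 0 :: real"
  have "?P x y {x, y} \<le> ?P x y A + (1 - ?inside x y)" for x y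
  proof -
    have "?P x y {x, y} \<le> ?P x y (A \<union> ({x, y} - A))"
      by (intro measure_pmf.finite_measure_mono) auto
    also have "\<dots> = ?P x y A + ?P x y ({x, y} - A)"
      by (rule measure_pmf.finite_measure_Union) auto
    also have "?P x y ({x, y} - A) \<le> 1 - ?inside x y"
      by (cases "x \<in> A \<and> y \<in> A") auto
    finally show ?thesis by simp
  qed
  then have "accept_prob p K
      \<le> (\<Sum>x\<in>UNIV. \<Sum>y\<in>UNIV. pmf p x * pmf p y * (?P x y A + (1 - ?inside x y)))"
    unfolding accept_prob_def by (intro sum_mono mult_left_mono) auto
  also have "\<dots> = (\<Sum>z\<in>A. output_prob p K z) + (\<Sum>x\<in>UNIV. \<Sum>y\<in>UNIV. pmf p x * pmf p y)
      - (\<Sum>x\<in>UNIV. \<Sum>y\<in>UNIV. pmf p x * pmf p y * ?inside x y)"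
    by (simp add: sum_output_prob algebra_simps sum.distrib sum_subtractf)
  also have "(\<Sum>x\<in>UNIV. \<Sum>y\<in>UNIV. pmf p x * pmf p y * ?inside x y)
      = (\<Sum>x\<in>UNIV. \<Sum>y\<in>UNIV. (if x \<in> A then pmf p x else 0) * (if y \<in> A then pmf p y else 0))"
    by (intro sum.cong) auto
  also have "\<dots> = (\<Sum>x\<in>A. \<Sum>y\<in>A. pmf p x * pmf p y)"
    by (simp add: sum_product[symmetric] sum.If_cases)
  also have "\<dots> = (\<Sum>s\<in>A. pmf p s)\<^sup>2"
    by (rule sum_pmf_times_pmf)
  also have "(\<Sum>x\<in>UNIV. \<Sum>y\<in>UNIV. pmf p x * pmf p y) = 1"
    by (simp add: sum_pmf_times_pmf sum_pmf_UNIV)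
  also have "(\<Sum>z\<in>A. output_prob p K z) = (\<Sum>s\<in>A. pmf q s)"
    using assms unfolding valid_rule_def by simp
  finally show ?thesis .
qed

lemma row_sum_times_kernel:
  fixes m :: "'i \<Rightarrow> 'j::finite \<Rightarrow> real"
  assumes nonneg: "\<And>i j. 0 \<le> m i j"
  obtains K :: "'i \<Rightarrow> 'j pmf" where "\<And>i j. (\<Sum>j'\<in>UNIV. m i j') * pmf (K i) j = m i j"
proof -
  define R where "R i = (\<Sum>j\<in>UNIV. m i j)" for i
  define K where "K i = (if R i = 0 then return_pmf undefined else embed_pmf (\<lambda>j. m i j / R i))" for i
  have "R i * pmf (K i) j = m i j" for i j
  proof (cases "R i = 0")
    case True
    then show ?thesis
      using nonneg sum_nonneg_eq_0_iff[of UNIV "m i"] unfolding R_def by simp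
  next
    case False
    have "(\<integral>\<^sup>+j. ennreal (m i j / R i) \<partial>count_space UNIV) = ennreal (\<Sum>j\<in>UNIV. m i j / R i)"
      using nonneg by (simp add: nn_integral_count_space_finite R_def sum_nonneg)
    also have "(\<Sum>j\<in>UNIV. m i j / R i) = 1"
      using False unfolding R_def by (simp add: sum_divide_distrib[symmetric])
    finally have "pmf (embed_pmf (\<lambda>j. m i j / R i)) j = m i j / R i"
      using nonneg by (intro pmf_embed_pmf) (simp_all add: R_def sum_nonneg)
    then show ?thesis
      using False unfolding K_def by simp
  qed
  then show thesis
    using that unfolding R_def by blast
qed

lemma extend_to_coupling:
  fixes g :: "'i::finite \<Rightarrow> 'j::finite \<Rightarrow> real"
  assumes nonneg: "\<And>i j. 0 \<le> g i j"
    and rows: "\<And>i. (\<Sum>j\<in>UNIV. g i j) \<le> \<alpha> i" and cols: "\<And>j. (\<Sum>i\<in>UNIV. g i j) \<le> \<beta> j"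
    and mass: "sum \<alpha> UNIV = sum \<beta> UNIV"
  obtains m where "\<And>i j. g i j \<le> m i j"
    "\<And>i. (\<Sum>j\<in>UNIV. m i j) = \<alpha> i" "\<And>j. (\<Sum>i\<in>UNIV. m i j) = \<beta> j"
proof -
  define r where "r i = \<alpha> i - (\<Sum>j\<in>UNIV. g i j)" for i
  define d where "d j = \<beta> j - (\<Sum>i\<in>UNIV. g i j)" for j
  define D where "D = sum d UNIV"
  have r_nonneg: "0 \<le> r i" and d_nonneg: "0 \<le> d j" for i j
    using rows cols unfolding r_def d_def by (simp_all add: algebra_simps)
  have "sum r UNIV = sum \<alpha> UNIV - (\<Sum>i\<in>UNIV. \<Sum>j\<in>UNIV. g i j)"
    unfolding r_def by (simp add: sum_subtractf)
  also have "\<dots> = sum \<beta> UNIV - (\<Sum>j\<in>UNIV. \<Sum>i\<in>UNIV. g i j)"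
    unfolding mass by (subst sum.swap) (rule refl)
  also have "\<dots> = D"
    unfolding D_def d_def by (simp add: sum_subtractf)
  finally have "sum r UNIV = D" .
  define m where "m i j = g i j + r i * d j / D" for i j
  show thesis
  proof (rule that)
    show "g i j \<le> m i j" for i j
      unfolding m_def using r_nonneg d_nonneg by (simp add: D_def sum_nonneg)
    show "(\<Sum>j\<in>UNIV. m i j) = \<alpha> i" for i
    proof (cases "D = 0")
      case True
      then have "r i = 0"
        using \<open>sum r UNIV = D\<close> r_nonneg sum_nonneg_eq_0_iff[of UNIV r] by simp
      then show ?thesis unfolding m_def r_def True by simp
    next
      case False
      have "(\<Sum>j\<in>UNIV. r i * d j / D) = r i * D / D"
        unfolding D_def sum_distrib_left sum_divide_distrib ..
      then show ?thesis
        using False unfolding m_def sum.distrib by (simp add: r_def)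
    qed
    show "(\<Sum>i\<in>UNIV. m i j) = \<beta> j" for j
    proof (cases "D = 0")
      case True
      then have "d j = 0"
        using d_nonneg sum_nonneg_eq_0_iff[of UNIV d] unfolding D_def by simp
      then show ?thesis unfolding m_def d_def True by simp
    next
      case False
      have "(\<Sum>i\<in>UNIV. r i * d j / D) = D * d j / D"
        unfolding \<open>sum r UNIV = D\<close>[symmetric] sum_distrib_right sum_divide_distrib ..
      then show ?thesis
        using False unfolding m_def sum.distrib by (simp add: d_def)
    qed
  qed
qed

lemma valid_rule_of_coupling:
  fixes p q :: "'a::finite pmf" and m :: "'a \<times> 'a \<Rightarrow> 'a \<Rightarrow> real"
  assumes nonneg: "\<And>xy z. 0 \<le> m xy z"
    and rows: "\<And>xy. (\<Sum>z\<in>UNIV. m xy z) = pmf (pair_pmf p p) xy"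
    and cols: "\<And>z. (\<Sum>xy\<in>UNIV. m xy z) = pmf q z"
  obtains K where "valid_rule p q K"
    "accept_prob p K = (\<Sum>x\<in>UNIV. \<Sum>y\<in>UNIV. \<Sum>z\<in>{x, y}. m (x, y) z)"
proof -
  obtain K' where K': "\<And>xy z. (\<Sum>z'\<in>UNIV. m xy z') * pmf (K' xy) z = m xy z"
    using row_sum_times_kernel[of m] nonneg by blast
  define K where "K x y = K' (x, y)" for x y
  have m_eq: "pmf p x * pmf p y * pmf (K x y) z = m (x, y) z" for x y z
    using K'[of "(x, y)" z] unfolding K_def rows pmf_pair .
  show thesis
  proof (rule that)
    have "(\<Sum>x\<in>UNIV. \<Sum>y\<in>UNIV. m (x, y) z) = pmf q z" for z
      unfolding cols[of z, symmetric] UNIV_Times_UNIV[symmetric] sum.cartesian_product' ..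
    then show "valid_rule p q K"
      unfolding valid_rule_def output_prob_def m_eq by blast
    show "accept_prob p K = (\<Sum>x\<in>UNIV. \<Sum>y\<in>UNIV. \<Sum>z\<in>{x, y}. m (x, y) z)"
      unfolding accept_prob_def measure_measure_pmf_finite[OF finite] sum_distrib_left m_eq ..
  qed
qed

(* The pair (x, y) of drafts may be routed to either of its tokens or to the rejection sink None. *)
definition selection_edges :: "(('a \<times> 'a) \<times> 'a option) set" where
  "selection_edges = {((x, y), j). j \<in> {None, Some x, Some y}}"

lemma selection_hall_condition:
  fixes p q :: "'a::finite pmf"
  assumes "0 \<le> \<delta>" and dominated: "\<And>A. (\<Sum>s\<in>A. pmf p s)\<^sup>2 \<le> (\<Sum>s\<in>A. pmf q s) + \<delta>"
  shows "hall_condition selection_edges (pmf (pair_pmf p p)) (case_option \<delta> (pmf q))"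
  unfolding hall_condition_def
proof
  fix S :: "('a \<times> 'a) set"
  show "sum (pmf (pair_pmf p p)) S \<le> sum (case_option \<delta> (pmf q)) (selection_edges `` S)"
  proof (cases "S = {}")
    case False
    define A where "A = fst ` S \<union> snd ` S"
    have "selection_edges `` S = insert None (Some ` A)"
      using False unfolding A_def selection_edges_def by (auto simp: image_iff; force)
    then have "sum (case_option \<delta> (pmf q)) (selection_edges `` S) = \<delta> + (\<Sum>s\<in>A. pmf q s)"
      by (simp add: sum.reindex)
    moreover have "sum (pmf (pair_pmf p p)) S \<le> sum (pmf (pair_pmf p p)) (A \<times> A)"
      by (rule sum_mono2) (force simp: A_def)+
    moreover have "sum (pmf (pair_pmf p p)) (A \<times> A) = (\<Sum>s\<in>A. pmf p s)\<^sup>2"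
      by (simp add: sum.cartesian_product' pmf_pair sum_pmf_times_pmf)
    ultimately show ?thesis
      using dominated[of A] by simp
  qed simp
qed

lemma selection_subcoupling:
  fixes p q :: "'a::finite pmf"
  assumes "0 \<le> \<delta>" and "\<And>A. (\<Sum>s\<in>A. pmf p s)\<^sup>2 \<le> (\<Sum>s\<in>A. pmf q s) + \<delta>"
  obtains g :: "'a \<times> 'a \<Rightarrow> 'a \<Rightarrow> real" where
    "\<And>xy z. 0 \<le> g xy z" "\<And>x y z. z \<notin> {x, y} \<Longrightarrow> g (x, y) z = 0"
    "\<And>xy. (\<Sum>z\<in>UNIV. g xy z) \<le> pmf (pair_pmf p p) xy"
    "\<And>z. (\<Sum>xy\<in>UNIV. g xy z) \<le> pmf q z"
    "1 - \<delta> \<le> (\<Sum>xy\<in>UNIV. \<Sum>z\<in>UNIV. g xy z)"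
proof -
  have "\<forall>j. 0 \<le> case_option \<delta> (pmf q) j"
    using \<open>0 \<le> \<delta>\<close> by (simp split: option.split)
  then have "\<exists>f. supply_flow selection_edges (pmf (pair_pmf p p)) (case_option \<delta> (pmf q)) f"
    using selection_hall_condition[OF assms] by (intro hall_supply_flow) simp_all
  then obtain f where "supply_flow selection_edges (pmf (pair_pmf p p)) (case_option \<delta> (pmf q)) f"
    by blast
  then have nonneg: "\<And>xy j. 0 \<le> f xy j"
    and support: "\<And>xy j. f xy j \<noteq> 0 \<Longrightarrow> (xy, j) \<in> selection_edges"
    and rows: "\<And>xy. f xy None + (\<Sum>z\<in>UNIV. f xy (Some z)) = pmf (pair_pmf p p) xy"
    and cols: "\<And>j. (\<Sum>xy\<in>UNIV. f xy j) \<le> case_option \<delta> (pmf q) j"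
    unfolding supply_flow_def sum_UNIV_option by blast+
  show thesis
  proof (rule that[of "\<lambda>xy z. f xy (Some z)"])
    show "f (x, y) (Some z) = 0" if "z \<notin> {x, y}" for x y z
      using support[of "(x, y)" "Some z"] that unfolding selection_edges_def by auto
    show "(\<Sum>z\<in>UNIV. f xy (Some z)) \<le> pmf (pair_pmf p p) xy" for xy
      using rows[of xy] nonneg[of xy None] by linarith
    show "(\<Sum>xy\<in>UNIV. f xy (Some z)) \<le> pmf q z" for z
      using cols[of "Some z"] by simp
    have "(\<Sum>xy\<in>UNIV. \<Sum>z\<in>UNIV. f xy (Some z)) = (\<Sum>xy\<in>UNIV. pmf (pair_pmf p p) xy - f xy None)"
      using rows by (intro sum.cong refl) (simp add: eq_diff_eq add.commute)
    also have "\<dots> = 1 - (\<Sum>xy\<in>UNIV. f xy None)"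
      by (simp add: sum_subtractf sum_pmf_UNIV)
    finally show "1 - \<delta> \<le> (\<Sum>xy\<in>UNIV. \<Sum>z\<in>UNIV. f xy (Some z))"
      using cols[of None] by simp
  qed (rule nonneg)
qed

lemma exists_valid_rule_accept_prob_ge:
  fixes p q :: "'a::finite pmf"
  assumes "0 \<le> \<delta>" and "\<And>A. (\<Sum>s\<in>A. pmf p s)\<^sup>2 \<le> (\<Sum>s\<in>A. pmf q s) + \<delta>"
  obtains K where "valid_rule p q K" "1 - \<delta> \<le> accept_prob p K"
proof -
  obtain g where g_nonneg: "\<And>xy z. 0 \<le> g xy z"
    and support: "\<And>x y z. z \<notin> {x, y} \<Longrightarrow> g (x, y) z = 0"
    and rows: "\<And>xy. (\<Sum>z\<in>UNIV. g xy z) \<le> pmf (pair_pmf p p) xy"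
    and cols: "\<And>z. (\<Sum>xy\<in>UNIV. g xy z) \<le> pmf q z"
    and mass: "1 - \<delta> \<le> (\<Sum>xy\<in>UNIV. \<Sum>z\<in>UNIV. g xy z)"
    using selection_subcoupling[OF assms] by blast
  obtain m where g_le_m: "\<And>xy z. g xy z \<le> m xy z"
    and "\<And>xy. (\<Sum>z\<in>UNIV. m xy z) = pmf (pair_pmf p p) xy" "\<And>z. (\<Sum>xy\<in>UNIV. m xy z) = pmf q z"
    using extend_to_coupling[of g, OF g_nonneg rows cols] by (auto simp: sum_pmf_UNIV)
  moreover have "0 \<le> m xy z" for xy z
    using g_nonneg g_le_m order_trans by blast
  ultimately obtain K where "valid_rule p q K"
    and accept: "accept_prob p K = (\<Sum>x\<in>UNIV. \<Sum>y\<in>UNIV. \<Sum>z\<in>{x, y}. m (x, y) z)"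
    using valid_rule_of_coupling[of m p q] by blast
  have "1 - \<delta> \<le> (\<Sum>x\<in>UNIV. \<Sum>y\<in>UNIV. \<Sum>z\<in>UNIV. g (x, y) z)"
    using mass unfolding UNIV_Times_UNIV[symmetric] sum.cartesian_product' .
  also have "\<dots> = (\<Sum>x\<in>UNIV. \<Sum>y\<in>UNIV. \<Sum>z\<in>{x, y}. g (x, y) z)"
    using support by (intro sum.cong refl sum.mono_neutral_right) auto
  also have "\<dots> \<le> accept_prob p K"
    unfolding accept using g_le_m by (intro sum_mono)
  finally show thesis
    using that \<open>valid_rule p q K\<close> by blast
qed

theorem theorem3:
  fixes p q :: "'a::finite pmf"
  shows "opt_accept p q =
    Min ((\<lambda>A. (\<Sum>s\<in>A. pmf q s) + (\<Sum>s\<in>UNIV - A. pmf p s) ^ 2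
               + 2 * (\<Sum>s\<in>A. pmf p s) * (\<Sum>s\<in>UNIV - A. pmf p s)) ` (UNIV :: 'a set set))"
    (is "_ = Min (?h ` UNIV)")
proof -
  let ?M = "Min (?h ` UNIV)"
  have M_le: "?M \<le> (\<Sum>s\<in>A. pmf q s) + 1 - (\<Sum>s\<in>A. pmf p s)\<^sup>2" for A
    using Min_le[of "?h ` UNIV" "?h A"] by (simp add: acceptance_objective_eq)
  have upper: "accept_prob p K \<le> ?M" if "valid_rule p q K" for K
  proof -
    have "?M \<in> ?h ` UNIV"
      by (rule Min_in) auto
    then obtain A where "?M = ?h A"
      by blast
    then show ?thesis
      using accept_prob_le[OF that, of A] by (simp add: acceptance_objective_eq)
  qed
  have "0 \<le> 1 - ?M"
    using M_le[of "{}"] by simp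
  moreover have "(\<Sum>s\<in>A. pmf p s)\<^sup>2 \<le> (\<Sum>s\<in>A. pmf q s) + (1 - ?M)" for A
    using M_le[of A] by simp
  ultimately obtain K where valid: "valid_rule p q K" and lower: "?M \<le> accept_prob p K"
    using exists_valid_rule_accept_prob_ge[of "1 - ?M" p q] by auto
  have "accept_prob p K = ?M"
    using upper[OF valid] lower by (rule order.antisym)
  moreover have "opt_accept p q = accept_prob p K"
    unfolding opt_accept_def
  proof (rule cSup_eq_maximum)
    show "accept_prob p K \<in> {accept_prob p K |K. valid_rule p q K}"
      using valid by blast
    show "x \<le> accept_prob p K" if "x \<in> {accept_prob p K |K. valid_rule p q K}" for x
      using that upper unfolding \<open>accept_prob p K = ?M\<close> by blast
  qed
  ultimately show ?thesis by simp
qed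

end
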